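(* Let $X$ be a stratified-smooth space of dimension $n$ and let $X_s$ be a stratum of $X$. Then the closure $\overline{X_s}$, with strata $X_t$ for $t\le s$, naturally carries the structure of a stratified-smooth space of dimension $d(s)$.
   Context: A graded poset is a finite poset $\Delta$ with $d:\Delta\to\mathbb Z_{\ge0}$ such that $s<t$ implies $d(s)<d(t)$; its dimension is $\max d$. A stratified space $(X,\Delta)$ is a topological space with locally closed subsets $X_s$ ($s\in\Delta$) such that $\overline{X_s}=\bigcup_{t\le s}X_t$. A naive stratified-smooth space of dimension $n$ is a second-countable Hausdorff $X$ stratified by a graded poset of dimension $n$, with each $X_s$ a smooth manifold of dimension $d(s)$; a naive stratified-smooth map to a manifold is continuous and smooth on each stratum; an isomorphism is a poset isomorphism together with a homeomorphism carrying strata to corresponding strata by diffeomorphisms. An open $U\subset X$ is naive stratified-smooth with poset $\{s:U\cap X_s\ne\varnothing\}$. $[0,\infty)^m\times\mathbb R^n$ is stratified by the cube poset $\{0,1\}^m$ (coordinatewise order), the stratum of $s$ being $\prod_iF(s(i))\times\mathbb R^n$ with $F(0)=\{0\},F(1)=(0,\infty)$, dimension $\sum_i s(i)+n$. A cutout locus is $Z(\psi)=\psi^{-1}(0)$ where $V\subset[0,\infty)^m\times\mathbb R^n$ is open with $0\in V$ and $\psi:V\to\mathbb R^\ell$ is naive stratified-smooth with $0$ a regular value, stratified by $\Delta(\psi)=\{s:Z(\psi)\cap V_s\ne\varnothing\}$ with dimensions lowered by $\ell$. A stratified-smooth space is a naive stratified-smooth space each point of which has an open neighborhood isomorphic to a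 cutout locus. *)

theory Defs
  imports "HOL-Analysis.Analysis"
begin

text \<open>R^J = functions nat => real vanishing outside the finite index set J,
  with the (product = Euclidean) topology.  R^k is csub {..<k}.\<close>

definition csub :: "nat set \<Rightarrow> (nat \<Rightarrow> real) set" where
  "csub J = {x. \<forall>i. i \<notin> J \<longrightarrow> x i = 0}"

definition pdv :: "nat \<Rightarrow> ((nat \<Rightarrow> real) \<Rightarrow> (nat \<Rightarrow> real)) \<Rightarrow> (nat \<Rightarrow> real) \<Rightarrow> (nat \<Rightarrow> real)" where
  "pdv i f x = (\<lambda>j. deriv (\<lambda>t. f (x(i := x i + t)) j) 0)"

fun ipd :: "nat list \<Rightarrow> ((nat \<Rightarrow> real) \<Rightarrow> (nat \<Rightarrow> real)) \<Rightarrow> (nat \<Rightarrow> real) \<Rightarrow> (nat \<Rightarrow> real)" where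
  "ipd [] f = f"
| "ipd (i # is) f = pdv i (ipd is f)"

definition cinf_on :: "nat set \<Rightarrow> (nat \<Rightarrow> real) set \<Rightarrow> ((nat \<Rightarrow> real) \<Rightarrow> (nat \<Rightarrow> real)) \<Rightarrow> bool" where
  "cinf_on J U f \<longleftrightarrow> U \<subseteq> csub J \<and> openin (top_of_set (csub J)) U \<and>
     (\<forall>is. set is \<subseteq> J \<longrightarrow> continuous_on U (ipd is f) \<and>
        (\<forall>i\<in>J. \<forall>x\<in>U. \<forall>j. (\<lambda>t. ipd is f (x(i := x i + t)) j) differentiable (at 0)))"

definition graded_poset :: "'s set \<Rightarrow> ('s \<Rightarrow> 's \<Rightarrow> bool) \<Rightarrow> ('s \<Rightarrow> nat) \<Rightarrow> bool" where
  "graded_poset P le d \<longleftrightarrow> finite P \<and>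
     (\<forall>s\<in>P. le s s) \<and>
     (\<forall>s\<in>P. \<forall>t\<in>P. le s t \<and> le t s \<longrightarrow> s = t) \<and>
     (\<forall>s\<in>P. \<forall>t\<in>P. \<forall>u\<in>P. le s t \<and> le t u \<longrightarrow> le s u) \<and>
     (\<forall>s\<in>P. \<forall>t\<in>P. le s t \<and> s \<noteq> t \<longrightarrow> d s < d t)"

definition graded_dim :: "'s set \<Rightarrow> ('s \<Rightarrow> nat) \<Rightarrow> nat" where
  "graded_dim P d = Max (d ` P)"

definition locally_closed_in :: "'a topology \<Rightarrow> 'a set \<Rightarrow> bool" where
  "locally_closed_in X A \<longleftrightarrow> (\<exists>U C. openin X U \<and> closedin X C \<and> A = U \<inter> C)"

definition stratified :: "'a topology \<Rightarrow> 's set \<Rightarrow> ('s \<Rightarrow> 's \<Rightarrow> bool) \<Rightarrow> ('s \<Rightarrow> 'a set) \<Rightarrow> bool" where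
  "stratified X P le S \<longleftrightarrow>
     (\<forall>s\<in>P. S s \<noteq> {} \<and> S s \<subseteq> topspace X \<and> locally_closed_in X (S s)) \<and>
     topspace X = (\<Union>s\<in>P. S s) \<and>
     (\<forall>s\<in>P. \<forall>t\<in>P. s \<noteq> t \<longrightarrow> S s \<inter> S t = {}) \<and>
     (\<forall>s\<in>P. X closure_of (S s) = (\<Union>t\<in>{t\<in>P. le t s}. S t))"

definition smooth_atlas :: "'a topology \<Rightarrow> 'a set \<Rightarrow> nat \<Rightarrow> ('a set \<times> ('a \<Rightarrow> nat \<Rightarrow> real)) set \<Rightarrow> bool" where
  "smooth_atlas X M k Aa \<longleftrightarrow>
     (\<forall>(W, \<phi>)\<in>Aa. W \<subseteq> M \<and> openin (subtopology X M) W \<and> \<phi> ` W \<subseteq> csub {..<k} \<and>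
        openin (top_of_set (csub {..<k})) (\<phi> ` W) \<and>
        homeomorphic_map (subtopology X W) (top_of_set (\<phi> ` W)) \<phi>) \<and>
     M \<subseteq> (\<Union>(W, \<phi>)\<in>Aa. W) \<and>
     (\<forall>(W1, \<phi>1)\<in>Aa. \<forall>(W2, \<phi>2)\<in>Aa.
        cinf_on {..<k} (\<phi>1 ` (W1 \<inter> W2)) (\<phi>2 \<circ> inv_into W1 \<phi>1))"

definition naive_ss :: "'a topology \<Rightarrow> 's set \<Rightarrow> ('s \<Rightarrow> 's \<Rightarrow> bool) \<Rightarrow> ('s \<Rightarrow> nat) \<Rightarrow> ('s \<Rightarrow> 'a set)
     \<Rightarrow> ('s \<Rightarrow> ('a set \<times> ('a \<Rightarrow> nat \<Rightarrow> real)) set) \<Rightarrow> bool" where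
  "naive_ss X P le d S A \<longleftrightarrow> second_countable X \<and> Hausdorff_space X \<and>
     graded_poset P le d \<and> stratified X P le S \<and>
     (\<forall>s\<in>P. smooth_atlas X (S s) (d s) (A s))"

text \<open>[0,oo)^m x R^n is realized in csub {..<m+n}: coordinates 0..m-1 are the
  half-line coordinates.  A cube-poset element s in {0,1}^m is represented by
  the set I = {i. s(i) = 1} subset of {..<m}; the coordinatewise order is inclusion.\<close>

definition quadrant :: "nat \<Rightarrow> nat \<Rightarrow> (nat \<Rightarrow> real) set" where
  "quadrant m n = {x \<in> csub {..<m+n}. \<forall>i<m. 0 \<le> x i}"

definition cstratum :: "nat \<Rightarrow> nat \<Rightarrow> nat set \<Rightarrow> (nat \<Rightarrow> real) set" where
  "cstratum m n I = {x \<in> csub {..<m+n}. \<forall>i<m. (i \<in> I \<longrightarrow> 0 < x i) \<and> (i \<notin> I \<longrightarrow> x i = 0)}"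

text \<open>coordinates of the linear span of the stratum of I\<close>
definition cjs :: "nat \<Rightarrow> nat \<Rightarrow> nat set \<Rightarrow> nat set" where
  "cjs m n I = I \<union> {m..<m+n}"

definition zero_set :: "(nat \<Rightarrow> real) set \<Rightarrow> ((nat \<Rightarrow> real) \<Rightarrow> (nat \<Rightarrow> real)) \<Rightarrow> (nat \<Rightarrow> real) set" where
  "zero_set V \<psi> = {x \<in> V. \<psi> x = (\<lambda>_. 0)}"

text \<open>psi : V -> R^l naive stratified-smooth (continuous, smooth on every stratum),
  with 0 a regular value (the differential of psi restricted to each stratum is
  surjective at each zero).\<close>
definition cutout :: "nat \<Rightarrow> nat \<Rightarrow> nat \<Rightarrow> (nat \<Rightarrow> real) set \<Rightarrow> ((nat \<Rightarrow> real) \<Rightarrow> (nat \<Rightarrow> real)) \<Rightarrow> bool" where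
  "cutout m n l V \<psi> \<longleftrightarrow>
     openin (top_of_set (quadrant m n)) V \<and> (\<lambda>_. 0) \<in> V \<and>
     continuous_on V \<psi> \<and> \<psi> ` V \<subseteq> csub {..<l} \<and>
     (\<forall>I. I \<subseteq> {..<m} \<longrightarrow> cinf_on (cjs m n I) (V \<inter> cstratum m n I) \<psi>) \<and>
     (\<forall>I. I \<subseteq> {..<m} \<longrightarrow> (\<forall>x \<in> zero_set V \<psi> \<inter> cstratum m n I.
        \<forall>y \<in> csub {..<l}. \<exists>c. y = (\<lambda>j. \<Sum>i\<in>cjs m n I. c i * pdv i \<psi> x j)))"

definition cposet :: "nat \<Rightarrow> nat \<Rightarrow> (nat \<Rightarrow> real) set \<Rightarrow> ((nat \<Rightarrow> real) \<Rightarrow> (nat \<Rightarrow> real)) \<Rightarrow> nat set set" where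
  "cposet m n V \<psi> = {I. I \<subseteq> {..<m} \<and> zero_set V \<psi> \<inter> cstratum m n I \<noteq> {}}"

definition diffeo_onto :: "'a set \<Rightarrow> nat \<Rightarrow> ('a set \<times> ('a \<Rightarrow> nat \<Rightarrow> real)) set \<Rightarrow> ('a \<Rightarrow> nat \<Rightarrow> real)
     \<Rightarrow> nat set \<Rightarrow> (nat \<Rightarrow> real) set \<Rightarrow> bool" where
  "diffeo_onto M k Aa h J N \<longleftrightarrow> bij_betw h M N \<and>
     (\<forall>(W, \<phi>)\<in>Aa.
        cinf_on {..<k} (\<phi> ` (W \<inter> M)) (h \<circ> inv_into W \<phi>) \<and>
        (\<forall>y \<in> h ` (W \<inter> M). \<exists>Ob g. openin (top_of_set (csub J)) Ob \<and> y \<in> Ob \<and> cinf_on J Ob g \<and>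
            (\<forall>z \<in> Ob \<inter> h ` (W \<inter> M). g z = \<phi> (inv_into M h z))))"

definition ss_smooth :: "'a topology \<Rightarrow> 's set \<Rightarrow> ('s \<Rightarrow> 's \<Rightarrow> bool) \<Rightarrow> ('s \<Rightarrow> nat) \<Rightarrow> ('s \<Rightarrow> 'a set)
     \<Rightarrow> ('s \<Rightarrow> ('a set \<times> ('a \<Rightarrow> nat \<Rightarrow> real)) set) \<Rightarrow> bool" where
  "ss_smooth X P le d S A \<longleftrightarrow> naive_ss X P le d S A \<and>
     (\<forall>x\<in>topspace X. \<exists>U. openin X U \<and> x \<in> U \<and>
        (\<exists>m n l V \<psi> \<iota> h. cutout m n l V \<psi> \<and>
           bij_betw \<iota> {s\<in>P. U \<inter> S s \<noteq> {}} (cposet m n V \<psi>) \<and>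
           (\<forall>s\<in>{s\<in>P. U \<inter> S s \<noteq> {}}. \<forall>t\<in>{s\<in>P. U \<inter> S s \<noteq> {}}. le s t \<longleftrightarrow> \<iota> s \<subseteq> \<iota> t) \<and>
           (\<forall>s\<in>{s\<in>P. U \<inter> S s \<noteq> {}}. d s + l = card (\<iota> s) + n) \<and>
           homeomorphic_map (subtopology X U) (top_of_set (zero_set V \<psi>)) h \<and>
           (\<forall>s\<in>{s\<in>P. U \<inter> S s \<noteq> {}}.
              h ` (U \<inter> S s) = zero_set V \<psi> \<inter> cstratum m n (\<iota> s) \<and>
              diffeo_onto (U \<inter> S s) (d s) (A s) h (cjs m n (\<iota> s)) (zero_set V \<psi> \<inter> cstratum m n (\<iota> s)))))"

end

theory Submission
  imports Defs
begin

text \<open>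
  Let \<open>x\<close> lie in the closure of \<open>X\<^sub>s\<close>, let \<open>h : U \<rightarrow> Z(\<psi>) \<subseteq> [0,\<infinity>)\<^sup>m \<times> \<real>\<^sup>n\<close> be a cutout
  chart at \<open>x\<close>, and let \<open>K \<subseteq> {0..<m}\<close> be the cube-poset element of \<open>s\<close>. Because \<open>U\<close> meets
  \<open>X\<^sub>s\<close>, the strata meeting \<open>U\<close> that lie below \<open>s\<close> are exactly those whose element is
  contained in \<open>K\<close>, so \<open>h\<close> maps \<open>U \<inter> closure X\<^sub>s\<close> onto the part of \<open>Z(\<psi>)\<close> in the closed
  face \<open>[0,\<infinity>)\<^sup>K \<times> \<real>\<^sup>n\<close>. A permutation of coordinates turns this face into
  \<open>[0,\<infinity>)\<^sup>k \<times> \<real>\<^sup>n\<close> with \<open>k = |K|\<close>, whose strata are strata of the original quadrant;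
  hence \<open>\<psi>\<close> restricted to the face is again a cutout, and \<open>h\<close> followed by the permutation
  is a cutout chart of the closure at \<open>x\<close>. The remaining structure (second countability,
  the Hausdorff property, the stratification, the atlases and the dimension) restricts directly.
\<close>

section \<open>Permuting coordinates\<close>

definition permute_coords :: "(nat \<Rightarrow> nat) \<Rightarrow> (nat \<Rightarrow> real) \<Rightarrow> nat \<Rightarrow> real" where
  "permute_coords \<sigma> y = y \<circ> inv \<sigma>"

lemma permute_coords_apply [simp]: "bij \<sigma> \<Longrightarrow> permute_coords \<sigma> y (\<sigma> j) = y j"
  by (simp add: permute_coords_def bij_is_inj)

lemma permute_coords_comp [simp]: "bij \<sigma> \<Longrightarrow> permute_coords \<sigma> (x \<circ> \<sigma>) = x"
  by (auto simp: permute_coords_def bij_is_surj surj_f_inv_f fun_eq_iff)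

lemma comp_permute_coords [simp]: "bij \<sigma> \<Longrightarrow> permute_coords \<sigma> y \<circ> \<sigma> = y"
  by (auto simp: fun_eq_iff)

lemma permute_coords_zero [simp]: "permute_coords \<sigma> (\<lambda>_. 0) = (\<lambda>_. 0)"
  by (simp add: permute_coords_def o_def)

lemma image_comp_right_eq_vimage: "bij \<sigma> \<Longrightarrow> (\<lambda>x. x \<circ> \<sigma>) ` E = permute_coords \<sigma> -` E"
  by (auto simp: image_iff) (metis comp_permute_coords)

lemma permute_coords_upd:
  "bij \<sigma> \<Longrightarrow> permute_coords \<sigma> (y(i := v)) = (permute_coords \<sigma> y)(\<sigma> i := v)"
  by (auto simp: permute_coords_def fun_eq_iff bij_is_inj bij_is_surj surj_f_inv_f)

lemma all_bij_iff: "bij \<sigma> \<Longrightarrow> (\<forall>i. Q i) \<longleftrightarrow> (\<forall>j. Q (\<sigma> j))"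
  by (metis bij_pointE)

lemma permute_coords_in_csub: "bij \<sigma> \<Longrightarrow> permute_coords \<sigma> y \<in> csub J \<longleftrightarrow> y \<in> csub (\<sigma> -` J)"
  unfolding csub_def mem_Collect_eq by (subst all_bij_iff) auto

lemma continuous_on_permute_coords: "continuous_on E (permute_coords \<sigma>)"
  unfolding permute_coords_def o_def
  by (intro continuous_on_coordinatewise_then_product
        continuous_on_subset[OF continuous_on_product_coordinates]) auto

lemma continuous_on_comp_right: "continuous_on E (\<lambda>x :: nat \<Rightarrow> real. x \<circ> \<sigma>)"
  unfolding o_def
  by (intro continuous_on_coordinatewise_then_product
        continuous_on_subset[OF continuous_on_product_coordinates]) auto

lemma homeomorphic_map_comp_right:
  fixes \<sigma> :: "nat \<Rightarrow> nat" and E :: "(nat \<Rightarrow> real) set"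
  assumes "bij \<sigma>"
  shows "homeomorphic_map (top_of_set E) (top_of_set ((\<lambda>x. x \<circ> \<sigma>) ` E)) (\<lambda>x. x \<circ> \<sigma>)"
  unfolding homeomorphic_map_maps homeomorphic_maps_def
  using assms
  by (intro exI[of _ "permute_coords \<sigma>"])
     (auto simp: continuous_on_comp_right continuous_on_permute_coords)

lemma ipd_comp_permute_coords:
  "bij \<sigma> \<Longrightarrow> ipd is (f \<circ> permute_coords \<sigma>) y = ipd (map \<sigma> is) f (permute_coords \<sigma> y)"
  by (induction "is" arbitrary: y) (simp_all add: pdv_def permute_coords_upd)

lemma ipd_comp_right: "ipd is ((\<lambda>x. x \<circ> \<sigma>) \<circ> f) y = ipd is f y \<circ> \<sigma>"
  by (induction "is" arbitrary: y) (simp_all add: pdv_def fun_eq_iff)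

lemma cinf_onI:
  assumes "openin (top_of_set (csub J)) U"
    and "\<And>is. set is \<subseteq> J \<Longrightarrow> continuous_on U (ipd is f)"
    and "\<And>is i x j. set is \<subseteq> J \<Longrightarrow> i \<in> J \<Longrightarrow> x \<in> U \<Longrightarrow>
           (\<lambda>t. ipd is f (x(i := x i + t)) j) differentiable (at 0)"
  shows "cinf_on J U f"
  using assms openin_imp_subset unfolding cinf_on_def by fastforce

lemma cinf_on_comp_permute_coords:
  assumes \<sigma>: "bij \<sigma>" and f: "cinf_on J E f"
  shows "cinf_on (\<sigma> -` J) {y \<in> csub (\<sigma> -` J). permute_coords \<sigma> y \<in> E} (f \<circ> permute_coords \<sigma>)"
    (is "cinf_on ?J ?E _")
proof (rule cinf_onI)
  obtain Ob where "open Ob" and E: "E = csub J \<inter> Ob"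
    using f unfolding cinf_on_def openin_open by blast
  then have "?E = csub ?J \<inter> permute_coords \<sigma> -` Ob"
    using permute_coords_in_csub[OF \<sigma>] by auto
  with \<open>open Ob\<close> show "openin (top_of_set (csub ?J)) ?E"
    unfolding openin_open by (blast intro: open_vimage continuous_on_permute_coords)
next
  fix "is" assume "set is \<subseteq> ?J"
  then have "set (map \<sigma> is) \<subseteq> J"
    by auto
  then have "continuous_on E (ipd (map \<sigma> is) f)"
    using f unfolding cinf_on_def by blast
  moreover have "ipd is (f \<circ> permute_coords \<sigma>) = ipd (map \<sigma> is) f \<circ> permute_coords \<sigma>"
    using ipd_comp_permute_coords[OF \<sigma>] by (auto simp: fun_eq_iff)
  ultimately show "continuous_on ?E (ipd is (f \<circ> permute_coords \<sigma>))"
    by (auto intro: continuous_on_compose2[OF _ continuous_on_permute_coords])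
next
  fix "is" i x j assume "set is \<subseteq> ?J" "i \<in> ?J" "x \<in> ?E"
  then have "set (map \<sigma> is) \<subseteq> J" "\<sigma> i \<in> J" "permute_coords \<sigma> x \<in> E"
    by auto
  then have "(\<lambda>t. ipd (map \<sigma> is) f ((permute_coords \<sigma> x)(\<sigma> i := permute_coords \<sigma> x (\<sigma> i) + t)) j)
      differentiable (at 0)"
    using f unfolding cinf_on_def by auto
  then show "(\<lambda>t. ipd is (f \<circ> permute_coords \<sigma>) (x(i := x i + t)) j) differentiable (at 0)"
    by (simp add: \<sigma> ipd_comp_permute_coords permute_coords_upd)
qed

lemma cinf_on_comp_right:
  assumes f: "cinf_on J E f"
  shows "cinf_on J E ((\<lambda>x. x \<circ> \<sigma>) \<circ> f)"
proof (rule cinf_onI)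
  show "openin (top_of_set (csub J)) E"
    using f unfolding cinf_on_def by blast
next
  fix "is" assume "set is \<subseteq> J"
  then have "continuous_on E (ipd is f)"
    using f unfolding cinf_on_def by blast
  then show "continuous_on E (ipd is ((\<lambda>x. x \<circ> \<sigma>) \<circ> f))"
    unfolding ipd_comp_right by (intro continuous_on_compose2[OF continuous_on_comp_right]) auto
next
  fix "is" i x j assume "set is \<subseteq> J" "i \<in> J" "x \<in> E"
  then show "(\<lambda>t. ipd is ((\<lambda>x. x \<circ> \<sigma>) \<circ> f) (x(i := x i + t)) j) differentiable (at 0)"
    using f unfolding cinf_on_def ipd_comp_right by (simp add: o_def)
qed

lemma diffeo_ontoI:
  assumes "bij_betw h M N"
    and "\<And>W \<phi>. (W, \<phi>) \<in> Aa \<Longrightarrow> cinf_on {..<k} (\<phi> ` (W \<inter> M)) (h \<circ> inv_into W \<phi>)"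
    and "\<And>W \<phi> y. (W, \<phi>) \<in> Aa \<Longrightarrow> y \<in> h ` (W \<inter> M) \<Longrightarrow>
          \<exists>Ob g. openin (top_of_set (csub J)) Ob \<and> y \<in> Ob \<and> cinf_on J Ob g \<and>
            (\<forall>z \<in> Ob \<inter> h ` (W \<inter> M). g z = \<phi> (inv_into M h z))"
  shows "diffeo_onto M k Aa h J N"
  unfolding diffeo_onto_def
  by (intro conjI assms(1) ballI, clarify, intro conjI ballI assms(2,3))

lemma diffeo_ontoD:
  assumes "diffeo_onto M k Aa h J N"
  shows "bij_betw h M N"
    and "(W, \<phi>) \<in> Aa \<Longrightarrow> cinf_on {..<k} (\<phi> ` (W \<inter> M)) (h \<circ> inv_into W \<phi>)"
    and "(W, \<phi>) \<in> Aa \<Longrightarrow> y \<in> h ` (W \<inter> M) \<Longrightarrow>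
          \<exists>Ob g. openin (top_of_set (csub J)) Ob \<and> y \<in> Ob \<and> cinf_on J Ob g \<and>
            (\<forall>z \<in> Ob \<inter> h ` (W \<inter> M). g z = \<phi> (inv_into M h z))"
proof -
  show "bij_betw h M N"
    using assms unfolding diffeo_onto_def by blast
  assume "(W, \<phi>) \<in> Aa"
  note chart = assms[unfolded diffeo_onto_def, THEN conjunct2, THEN bspec, OF this]
  show "cinf_on {..<k} (\<phi> ` (W \<inter> M)) (h \<circ> inv_into W \<phi>)"
    using chart by simp
  show "y \<in> h ` (W \<inter> M) \<Longrightarrow> \<exists>Ob g. openin (top_of_set (csub J)) Ob \<and> y \<in> Ob \<and> cinf_on J Ob g \<and>
      (\<forall>z \<in> Ob \<inter> h ` (W \<inter> M). g z = \<phi> (inv_into M h z))"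
    using chart by simp blast
qed

lemma diffeo_onto_comp_right:
  assumes \<sigma>: "bij \<sigma>" and D: "diffeo_onto M k Aa h J N" and N: "N \<subseteq> csub J"
  shows "diffeo_onto M k Aa ((\<lambda>x. x \<circ> \<sigma>) \<circ> h) (\<sigma> -` J) ((\<lambda>x. x \<circ> \<sigma>) ` N)"
proof (rule diffeo_ontoI)
  let ?R = "\<lambda>x :: nat \<Rightarrow> real. x \<circ> \<sigma>"
  note h = diffeo_ontoD(1)[OF D]
  have "inj_on ?R N"
    using \<sigma> by (metis (mono_tags, lifting) inj_on_def permute_coords_comp)
  then show Rh: "bij_betw (?R \<circ> h) M (?R ` N)"
    using h by (simp add: bij_betw_trans inj_on_imp_bij_betw)
  fix W \<phi> assume W: "(W, \<phi>) \<in> Aa"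
  from cinf_on_comp_right[OF diffeo_ontoD(2)[OF D W], of \<sigma>]
  show "cinf_on {..<k} (\<phi> ` (W \<inter> M)) ((?R \<circ> h) \<circ> inv_into W \<phi>)"
    by (simp only: o_assoc)
  fix y assume "y \<in> (?R \<circ> h) ` (W \<inter> M)"
  then obtain q where q: "q \<in> W \<inter> M" and y: "y = h q \<circ> \<sigma>"
    by auto
  obtain Ob g where "h q \<in> Ob" and g: "cinf_on J Ob g"
    and g_inv: "\<forall>z \<in> Ob \<inter> h ` (W \<inter> M). g z = \<phi> (inv_into M h z)"
    using diffeo_ontoD(3)[OF D W] q by blast
  let ?Ob = "{z \<in> csub (\<sigma> -` J). permute_coords \<sigma> z \<in> Ob}"
  have g': "cinf_on (\<sigma> -` J) ?Ob (g \<circ> permute_coords \<sigma>)"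
    by (rule cinf_on_comp_permute_coords[OF \<sigma> g])
  have "h q \<in> csub J"
    using h q N by (auto simp: bij_betw_def)
  then have "y \<in> ?Ob"
    using \<open>h q \<in> Ob\<close> \<sigma> by (simp add: y permute_coords_in_csub[symmetric])
  moreover have "(g \<circ> permute_coords \<sigma>) z = \<phi> (inv_into M (?R \<circ> h) z)"
    if z_img: "z \<in> ?Ob \<inter> (?R \<circ> h) ` (W \<inter> M)" for z
  proof -
    obtain q' where q': "q' \<in> W \<inter> M" and z: "z = h q' \<circ> \<sigma>"
      using z_img by auto
    have "inv_into M (?R \<circ> h) ((?R \<circ> h) q') = q'"
      using Rh q' by (intro inv_into_f_f) (auto simp: bij_betw_def)
    moreover have "inv_into M h (h q') = q'"
      using h q' by (simp add: bij_betw_def inv_into_f_f)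
    ultimately show ?thesis
      using z_img g_inv q' \<sigma> by (auto simp: z)
  qed
  ultimately show "\<exists>Ob g. openin (top_of_set (csub (\<sigma> -` J))) Ob \<and> y \<in> Ob \<and> cinf_on (\<sigma> -` J) Ob g \<and>
      (\<forall>z \<in> Ob \<inter> (?R \<circ> h) ` (W \<inter> M). g z = \<phi> (inv_into M (?R \<circ> h) z))"
    using g' unfolding cinf_on_def by blast
qed

section \<open>Faces of a quadrant\<close>

lemma bij_betw_extend_to_bij:
  fixes f :: "'a \<Rightarrow> 'a"
  assumes "finite A" and f: "bij_betw f A B"
  obtains g where "bij g" and "\<And>x. x \<in> A \<Longrightarrow> g x = f x"
proof -
  let ?F = "A \<union> B"
  have "finite B" "card A = card B"
    using assms bij_betw_finite bij_betw_same_card by blast+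
  then have "card (?F - A) = card (?F - B)"
    using \<open>finite A\<close> \<open>finite B\<close> by (simp add: card_Diff_subset)
  then obtain f' where f': "bij_betw f' (?F - A) (?F - B)"
    using \<open>finite A\<close> \<open>finite B\<close> finite_same_card_bij[of "?F - A" "?F - B"] by blast
  define g where "g x = (if x \<in> A then f x else if x \<in> ?F then f' x else x)" for x
  have "bij_betw g A B"
    using f by (rule bij_betw_cong[THEN iffD1, rotated]) (simp add: g_def)
  moreover have "bij_betw g (?F - A) (?F - B)"
    using f' by (rule bij_betw_cong[THEN iffD1, rotated]) (auto simp: g_def)
  moreover have "bij_betw g (- ?F) (- ?F)"
    by (rule bij_betw_cong[THEN iffD1, rotated, OF bij_betw_id]) (simp add: g_def)
  ultimately have "bij_betw g (A \<union> (?F - A) \<union> - ?F) (B \<union> (?F - B) \<union> - ?F)"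
    by (intro bij_betw_combine) auto
  moreover have "A \<union> (?F - A) \<union> - ?F = UNIV" "B \<union> (?F - B) \<union> - ?F = UNIV"
    by auto
  ultimately show ?thesis
    using that by (simp add: g_def)
qed

text \<open>
  \<open>\<sigma>\<close> identifies \<open>[0,\<infinity>)\<^sup>k \<times> \<real>\<^sup>n\<close>, \<open>k = card K\<close>, with the closed face
  \<open>[0,\<infinity>)\<^sup>K \<times> \<real>\<^sup>n\<close> of \<open>[0,\<infinity>)\<^sup>m \<times> \<real>\<^sup>n\<close>: the identification is \<open>permute_coords \<sigma>\<close>,
  with inverse \<open>\<lambda>x. x \<circ> \<sigma>\<close>.
\<close>
locale face_reindexing =
  fixes \<sigma> :: "nat \<Rightarrow> nat" and K :: "nat set" and m n :: nat
  assumes bij: "bij \<sigma>" and K_sub: "K \<subseteq> {..<m}"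
    and image_half_coords: "\<sigma> ` {..<card K} = K"
    and image_line_coords: "\<sigma> ` {card K..<card K + n} = {m..<m + n}"

lemma face_reindexing_exists:
  assumes K: "K \<subseteq> {..<m}"
  obtains \<sigma> where "face_reindexing \<sigma> K m n"
proof -
  let ?k = "card K"
  have "finite K"
    using K finite_subset by blast
  then obtain g0 where g0: "bij_betw g0 {..<?k} K"
    using ex_bij_betw_nat_finite atLeast0LessThan by metis
  define g where "g j = (if j < ?k then g0 j else j - ?k + m)" for j
  have half: "bij_betw g {..<?k} K"
    using g0 by (rule bij_betw_cong[THEN iffD1, rotated]) (simp add: g_def)
  moreover have lines: "bij_betw g {?k..<?k + n} {m..<m + n}"
    by (rule bij_betwI[where g = "\<lambda>i. i - m + ?k"]) (auto simp: g_def)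
  ultimately have "bij_betw g ({..<?k} \<union> {?k..<?k + n}) (K \<union> {m..<m + n})"
    using K by (intro bij_betw_combine) auto
  then obtain \<sigma> where "bij \<sigma>" and \<sigma>: "\<And>j. j \<in> {..<?k} \<union> {?k..<?k + n} \<Longrightarrow> \<sigma> j = g j"
    using bij_betw_extend_to_bij[of "{..<?k} \<union> {?k..<?k + n}" g] by blast
  have "\<sigma> ` {..<?k} = g ` {..<?k}" and "\<sigma> ` {?k..<?k + n} = g ` {?k..<?k + n}"
    using \<sigma> by (auto intro: image_cong)
  then have "\<sigma> ` {..<?k} = K" and "\<sigma> ` {?k..<?k + n} = {m..<m + n}"
    using half lines by (simp_all add: bij_betw_def)
  then show ?thesis
    using that K \<open>bij \<sigma>\<close> by (simp add: face_reindexing_def)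
qed

lemma cstratum_subset_csub: "cstratum m n I \<subseteq> csub (cjs m n I)"
  unfolding cstratum_def csub_def cjs_def by auto

lemma cstratum_subset_quadrant: "cstratum m n I \<subseteq> quadrant m n"
  unfolding cstratum_def quadrant_def by auto

lemma csub_mono: "J \<subseteq> J' \<Longrightarrow> csub J \<subseteq> csub J'"
  unfolding csub_def by auto

lemma cutoutD:
  assumes "cutout m n l V \<psi>"
  shows "openin (top_of_set (quadrant m n)) V" and "(\<lambda>_. 0) \<in> V" and "continuous_on V \<psi>"
    and "\<psi> ` V \<subseteq> csub {..<l}"
    and "I \<subseteq> {..<m} \<Longrightarrow> cinf_on (cjs m n I) (V \<inter> cstratum m n I) \<psi>"
    and "I \<subseteq> {..<m} \<Longrightarrow> x \<in> zero_set V \<psi> \<inter> cstratum m n I \<Longrightarrow> y \<in> csub {..<l} \<Longrightarrow>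
      \<exists>c. y = (\<lambda>j. \<Sum>i\<in>cjs m n I. c i * pdv i \<psi> x j)"
  using assms unfolding cutout_def by simp_all

context face_reindexing
begin

lemma image_cjs: "\<sigma> ` cjs (card K) n I = cjs m n (\<sigma> ` I)"
  by (simp add: cjs_def image_Un image_line_coords)

lemma vimage_cjs: "\<sigma> -` cjs m n (\<sigma> ` I) = cjs (card K) n I"
  by (metis image_cjs bij bij_is_inj inj_vimage_image_eq)

lemma image_face_coords: "\<sigma> ` {..<card K + n} = cjs m n K"
proof -
  have "{..<card K + n} = {..<card K} \<union> {card K..<card K + n}"
    by auto
  then show ?thesis
    by (simp add: cjs_def image_Un image_half_coords image_line_coords)
qed

lemma permute_coords_in_face: "permute_coords \<sigma> y \<in> csub (cjs m n K) \<longleftrightarrow> y \<in> csub {..<card K + n}"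
  by (metis image_face_coords permute_coords_in_csub bij bij_is_inj inj_vimage_image_eq)

lemma all_half_coords_iff:
  assumes y: "y \<in> csub {..<card K + n}" and Q0: "\<And>i. i < m \<Longrightarrow> i \<notin> K \<Longrightarrow> Q i 0"
  shows "(\<forall>i<m. Q i (permute_coords \<sigma> y i)) \<longleftrightarrow> (\<forall>j<card K. Q (\<sigma> j) (y j))"
proof
  assume "\<forall>i<m. Q i (permute_coords \<sigma> y i)"
  moreover have "\<sigma> j < m" if "j < card K" for j
    using that image_half_coords K_sub by auto
  ultimately show "\<forall>j<card K. Q (\<sigma> j) (y j)"
    using bij by fastforce
next
  assume Q: "\<forall>j<card K. Q (\<sigma> j) (y j)"
  show "\<forall>i<m. Q i (permute_coords \<sigma> y i)"
  proof (intro allI impI)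
    fix i assume "i < m"
    show "Q i (permute_coords \<sigma> y i)"
    proof (cases "i \<in> K")
      case True
      then obtain j where "j < card K" and "i = \<sigma> j"
        using image_half_coords by auto
      then show ?thesis
        using Q bij by simp
    next
      case False
      then have "i \<notin> cjs m n K"
        using \<open>i < m\<close> by (simp add: cjs_def)
      then have "permute_coords \<sigma> y i = 0"
        using y permute_coords_in_face unfolding csub_def by blast
      then show ?thesis
        using Q0 \<open>i < m\<close> False by simp
    qed
  qed
qed

lemma quadrant_face_iff:
  "y \<in> quadrant (card K) n \<longleftrightarrow> permute_coords \<sigma> y \<in> quadrant m n \<inter> csub (cjs m n K)"
proof -
  have "csub (cjs m n K) \<subseteq> csub {..<m + n}"
    using K_sub by (intro csub_mono) (auto simp: cjs_def)
  then show ?thesis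
    using all_half_coords_iff[of y "\<lambda>_ v. 0 \<le> v"]
    by (auto simp: quadrant_def permute_coords_in_face)
qed

lemma cstratum_face_iff:
  assumes I: "I \<subseteq> {..<card K}"
  shows "y \<in> cstratum (card K) n I \<longleftrightarrow> permute_coords \<sigma> y \<in> cstratum m n (\<sigma> ` I)"
proof -
  have "\<sigma> ` I \<subseteq> K"
    using I image_half_coords by auto
  then have sub: "csub (cjs m n (\<sigma> ` I)) \<subseteq> csub (cjs m n K)" "csub (cjs m n K) \<subseteq> csub {..<m + n}"
    using K_sub by (auto intro!: csub_mono simp: cjs_def)
  have face: "y \<in> csub {..<card K + n}"
    if "y \<in> cstratum (card K) n I \<or> permute_coords \<sigma> y \<in> cstratum m n (\<sigma> ` I)"
    using that
  proof
    assume "permute_coords \<sigma> y \<in> cstratum m n (\<sigma> ` I)"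
    then show ?thesis
      using cstratum_subset_csub sub permute_coords_in_face by blast
  qed (simp add: cstratum_def)
  let ?Q = "\<lambda>i v. (i \<in> \<sigma> ` I \<longrightarrow> 0 < v) \<and> (i \<notin> \<sigma> ` I \<longrightarrow> v = 0)"
  have "(\<forall>i<m. ?Q i (permute_coords \<sigma> y i)) \<longleftrightarrow> (\<forall>j<card K. ?Q (\<sigma> j) (y j))"
    if "y \<in> csub {..<card K + n}"
    using all_half_coords_iff[OF that, of ?Q] \<open>\<sigma> ` I \<subseteq> K\<close> by blast
  then show ?thesis
    using face I bij permute_coords_in_face sub(2)
    by (auto simp: cstratum_def bij_is_inj inj_image_mem_iff)
qed

lemma vimage_half_coords: "\<sigma> -` K = {..<card K}"
  by (metis image_half_coords bij bij_is_inj inj_vimage_image_eq)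

definition face_domain :: "(nat \<Rightarrow> real) set \<Rightarrow> (nat \<Rightarrow> real) set" where
  "face_domain V = {y \<in> quadrant (card K) n. permute_coords \<sigma> y \<in> V}"

lemma zero_set_face_domain:
  assumes "V \<subseteq> quadrant m n"
  shows "zero_set (face_domain V) (\<psi> \<circ> permute_coords \<sigma>) =
    (\<lambda>x. x \<circ> \<sigma>) ` (zero_set V \<psi> \<inter> csub (cjs m n K))"
  using assms quadrant_face_iff by (auto simp: face_domain_def zero_set_def image_comp_right_eq_vimage bij)

lemma zero_set_face_domain_cstratum:
  assumes "I \<subseteq> {..<card K}"
  shows "zero_set (face_domain V) (\<psi> \<circ> permute_coords \<sigma>) \<inter> cstratum (card K) n I =
    (\<lambda>x. x \<circ> \<sigma>) ` (zero_set V \<psi> \<inter> cstratum m n (\<sigma> ` I))"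
proof -
  have "y \<in> face_domain V \<inter> cstratum (card K) n I \<longleftrightarrow> permute_coords \<sigma> y \<in> V \<inter> cstratum m n (\<sigma> ` I)"
    for y
    using cstratum_face_iff[OF assms] cstratum_subset_quadrant unfolding face_domain_def by blast
  then show ?thesis
    by (auto simp: zero_set_def image_comp_right_eq_vimage bij)
qed

lemma cposet_face_domain:
  "cposet (card K) n (face_domain V) (\<psi> \<circ> permute_coords \<sigma>) = vimage \<sigma> ` {I \<in> cposet m n V \<psi>. I \<subseteq> K}"
proof safe
  fix I assume "I \<in> cposet (card K) n (face_domain V) (\<psi> \<circ> permute_coords \<sigma>)"
  then have I: "I \<subseteq> {..<card K}"
    and "zero_set (face_domain V) (\<psi> \<circ> permute_coords \<sigma>) \<inter> cstratum (card K) n I \<noteq> {}"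
    unfolding cposet_def by blast+
  then have "zero_set V \<psi> \<inter> cstratum m n (\<sigma> ` I) \<noteq> {}"
    by (simp add: zero_set_face_domain_cstratum)
  moreover have "\<sigma> ` I \<subseteq> K"
    using I image_half_coords by blast
  ultimately show "I \<in> vimage \<sigma> ` {I \<in> cposet m n V \<psi>. I \<subseteq> K}"
    using K_sub bij unfolding cposet_def
    by (intro image_eqI[of _ _ "\<sigma> ` I"]) (auto simp: bij_is_inj inj_vimage_image_eq)
next
  fix I assume "I \<in> cposet m n V \<psi>" and "I \<subseteq> K"
  then have "\<sigma> -` I \<subseteq> {..<card K}" and "zero_set V \<psi> \<inter> cstratum m n (\<sigma> ` \<sigma> -` I) \<noteq> {}"
    using vimage_half_coords bij by (auto simp: cposet_def bij_is_surj surj_image_vimage_eq)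
  then show "\<sigma> -` I \<in> cposet (card K) n (face_domain V) (\<psi> \<circ> permute_coords \<sigma>)"
    by (simp add: cposet_def zero_set_face_domain_cstratum)
qed

lemma cinf_on_face_domain:
  assumes I: "I \<subseteq> {..<card K}" and \<psi>: "cinf_on (cjs m n (\<sigma> ` I)) (V \<inter> cstratum m n (\<sigma> ` I)) \<psi>"
  shows "cinf_on (cjs (card K) n I) (face_domain V \<inter> cstratum (card K) n I) (\<psi> \<circ> permute_coords \<sigma>)"
proof -
  have "face_domain V \<inter> cstratum (card K) n I =
      {y \<in> csub (cjs (card K) n I). permute_coords \<sigma> y \<in> V \<inter> cstratum m n (\<sigma> ` I)}"
    using cstratum_face_iff[OF I] cstratum_subset_csub cstratum_subset_quadrant
    unfolding face_domain_def by blast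
  then show ?thesis
    using cinf_on_comp_permute_coords[OF bij \<psi>] by (simp add: vimage_cjs)
qed

lemma span_pdv_comp_permute_coords:
  assumes regular: "\<exists>c. y = (\<lambda>j. \<Sum>i\<in>cjs m n (\<sigma> ` I). c i * pdv i \<psi> (permute_coords \<sigma> x) j)"
  shows "\<exists>c. y = (\<lambda>j. \<Sum>i\<in>cjs (card K) n I. c i * pdv i (\<psi> \<circ> permute_coords \<sigma>) x j)"
proof -
  obtain c where c: "y = (\<lambda>j. \<Sum>i\<in>cjs m n (\<sigma> ` I). c i * pdv i \<psi> (permute_coords \<sigma> x) j)"
    using regular by blast
  have pdv: "pdv i (\<psi> \<circ> permute_coords \<sigma>) x = pdv (\<sigma> i) \<psi> (permute_coords \<sigma> x)" for i
    using ipd_comp_permute_coords[OF bij, of "[i]" \<psi> x] by simp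
  have "inj_on \<sigma> (cjs (card K) n I)"
    using bij bij_is_inj inj_on_subset by blast
  then have "y = (\<lambda>j. \<Sum>i\<in>cjs (card K) n I. (c \<circ> \<sigma>) i * pdv i (\<psi> \<circ> permute_coords \<sigma>) x j)"
    unfolding c image_cjs[symmetric] pdv by (simp add: sum.reindex)
  then show ?thesis
    by blast
qed

lemma bij_betw_face_strata:
  assumes "bij_betw \<iota> Q (cposet m n V \<psi>)"
  shows "bij_betw (\<lambda>t. \<sigma> -` \<iota> t) {t \<in> Q. \<iota> t \<subseteq> K}
    (cposet (card K) n (face_domain V) (\<psi> \<circ> permute_coords \<sigma>))"
proof -
  have "\<iota> ` {t \<in> Q. \<iota> t \<subseteq> K} = {I \<in> \<iota> ` Q. I \<subseteq> K}"
    by blast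
  also have "\<dots> = {I \<in> cposet m n V \<psi>. I \<subseteq> K}"
    using bij_betw_imp_surj_on[OF assms] by simp
  finally have "bij_betw \<iota> {t \<in> Q. \<iota> t \<subseteq> K} {I \<in> cposet m n V \<psi>. I \<subseteq> K}"
    by (intro bij_betw_subset[OF assms]) auto
  moreover have "inj_on (vimage \<sigma>) {I \<in> cposet m n V \<psi>. I \<subseteq> K}"
    by (rule inj_onI) (metis bij bij_is_surj surj_image_vimage_eq)
  then have "bij_betw (vimage \<sigma>) {I \<in> cposet m n V \<psi>. I \<subseteq> K}
      (cposet (card K) n (face_domain V) (\<psi> \<circ> permute_coords \<sigma>))"
    by (simp add: bij_betw_def cposet_face_domain)
  ultimately have "bij_betw (vimage \<sigma> \<circ> \<iota>) {t \<in> Q. \<iota> t \<subseteq> K}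
      (cposet (card K) n (face_domain V) (\<psi> \<circ> permute_coords \<sigma>))"
    by (rule bij_betw_trans)
  then show ?thesis
    by (simp add: o_def)
qed

lemma face_stratum_diffeo:
  assumes J: "J \<subseteq> K" and img: "h ` M = zero_set V \<psi> \<inter> cstratum m n J"
    and D: "diffeo_onto M k Aa h (cjs m n J) (zero_set V \<psi> \<inter> cstratum m n J)"
  shows "((\<lambda>x. x \<circ> \<sigma>) \<circ> h) ` M = zero_set (face_domain V) (\<psi> \<circ> permute_coords \<sigma>) \<inter> cstratum (card K) n (\<sigma> -` J)"
    and "diffeo_onto M k Aa ((\<lambda>x. x \<circ> \<sigma>) \<circ> h) (cjs (card K) n (\<sigma> -` J))
      (zero_set (face_domain V) (\<psi> \<circ> permute_coords \<sigma>) \<inter> cstratum (card K) n (\<sigma> -` J))"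
proof -
  have "\<sigma> -` J \<subseteq> {..<card K}" and "\<sigma> ` \<sigma> -` J = J"
    using J vimage_half_coords bij by (auto simp: bij_is_surj surj_image_vimage_eq)
  then have face: "zero_set (face_domain V) (\<psi> \<circ> permute_coords \<sigma>) \<inter> cstratum (card K) n (\<sigma> -` J) =
      (\<lambda>x. x \<circ> \<sigma>) ` (zero_set V \<psi> \<inter> cstratum m n J)"
    by (simp add: zero_set_face_domain_cstratum)
  then show "((\<lambda>x. x \<circ> \<sigma>) \<circ> h) ` M = zero_set (face_domain V) (\<psi> \<circ> permute_coords \<sigma>) \<inter> cstratum (card K) n (\<sigma> -` J)"
    by (simp only: image_comp[symmetric] img)
  have coords: "\<sigma> -` cjs m n J = cjs (card K) n (\<sigma> -` J)"
    using vimage_cjs[of "\<sigma> -` J"] \<open>\<sigma> ` \<sigma> -` J = J\<close> by simp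
  show "diffeo_onto M k Aa ((\<lambda>x. x \<circ> \<sigma>) \<circ> h) (cjs (card K) n (\<sigma> -` J))
      (zero_set (face_domain V) (\<psi> \<circ> permute_coords \<sigma>) \<inter> cstratum (card K) n (\<sigma> -` J))"
    using diffeo_onto_comp_right[OF bij D] cstratum_subset_csub by (simp only: face coords) blast
qed

lemma cutout_face_domain:
  assumes cut: "cutout m n l V \<psi>"
  shows "cutout (card K) n l (face_domain V) (\<psi> \<circ> permute_coords \<sigma>)"
  unfolding cutout_def
proof (intro conjI allI impI ballI)
  obtain Ob where "open Ob" and V: "V = quadrant m n \<inter> Ob"
    using cutoutD(1)[OF cut] unfolding openin_open by blast
  have "face_domain V = quadrant (card K) n \<inter> permute_coords \<sigma> -` Ob"
    using V quadrant_face_iff by (auto simp: face_domain_def)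
  moreover have "open (permute_coords \<sigma> -` Ob)"
    by (rule open_vimage[OF \<open>open Ob\<close> continuous_on_permute_coords])
  ultimately show "openin (top_of_set (quadrant (card K) n)) (face_domain V)"
    unfolding openin_open by blast
  have "(\<lambda>_. 0) \<in> quadrant (card K) n"
    by (simp add: quadrant_def csub_def)
  then show "(\<lambda>_. 0) \<in> face_domain V"
    using cutoutD(2)[OF cut] by (simp add: face_domain_def)
  have into_V: "permute_coords \<sigma> ` face_domain V \<subseteq> V"
    by (auto simp: face_domain_def)
  then show "continuous_on (face_domain V) (\<psi> \<circ> permute_coords \<sigma>)"
    by (intro continuous_on_compose continuous_on_permute_coords
        continuous_on_subset[OF cutoutD(3)[OF cut]])
  show "(\<psi> \<circ> permute_coords \<sigma>) ` face_domain V \<subseteq> csub {..<l}"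
    using cutoutD(4)[OF cut] into_V by auto
next
  fix I :: "nat set" assume I: "I \<subseteq> {..<card K}"
  then have I': "\<sigma> ` I \<subseteq> {..<m}"
    using image_half_coords K_sub by blast
  show "cinf_on (cjs (card K) n I) (face_domain V \<inter> cstratum (card K) n I) (\<psi> \<circ> permute_coords \<sigma>)"
    by (rule cinf_on_face_domain[OF I cutoutD(5)[OF cut I']])
  fix x y assume x: "x \<in> zero_set (face_domain V) (\<psi> \<circ> permute_coords \<sigma>) \<inter> cstratum (card K) n I"
    and y: "y \<in> csub {..<l}"
  have "permute_coords \<sigma> x \<in> zero_set V \<psi> \<inter> cstratum m n (\<sigma> ` I)"
    using x bij by (simp add: zero_set_face_domain_cstratum[OF I]) (auto simp: image_comp_right_eq_vimage)
  then show "\<exists>c. y = (\<lambda>j. \<Sum>i\<in>cjs (card K) n I. c i * pdv i (\<psi> \<circ> permute_coords \<sigma>) x j)"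
    by (intro span_pdv_comp_permute_coords cutoutD(6)[OF cut I' _ y])
qed

end

section \<open>Closures of strata\<close>

definition cutout_chart :: "'a topology \<Rightarrow> 's set \<Rightarrow> ('s \<Rightarrow> 's \<Rightarrow> bool) \<Rightarrow> ('s \<Rightarrow> nat) \<Rightarrow> ('s \<Rightarrow> 'a set)
    \<Rightarrow> ('s \<Rightarrow> ('a set \<times> ('a \<Rightarrow> nat \<Rightarrow> real)) set) \<Rightarrow> 'a set \<Rightarrow> nat \<Rightarrow> nat \<Rightarrow> nat
    \<Rightarrow> (nat \<Rightarrow> real) set \<Rightarrow> ((nat \<Rightarrow> real) \<Rightarrow> nat \<Rightarrow> real) \<Rightarrow> ('s \<Rightarrow> nat set) \<Rightarrow> ('a \<Rightarrow> nat \<Rightarrow> real) \<Rightarrow> bool"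
  where
  "cutout_chart X P le d S A U m n l V \<psi> \<iota> h \<longleftrightarrow> cutout m n l V \<psi> \<and>
     bij_betw \<iota> {s\<in>P. U \<inter> S s \<noteq> {}} (cposet m n V \<psi>) \<and>
     (\<forall>s\<in>{s\<in>P. U \<inter> S s \<noteq> {}}. \<forall>t\<in>{s\<in>P. U \<inter> S s \<noteq> {}}. le s t \<longleftrightarrow> \<iota> s \<subseteq> \<iota> t) \<and>
     (\<forall>s\<in>{s\<in>P. U \<inter> S s \<noteq> {}}. d s + l = card (\<iota> s) + n) \<and>
     homeomorphic_map (subtopology X U) (top_of_set (zero_set V \<psi>)) h \<and>
     (\<forall>s\<in>{s\<in>P. U \<inter> S s \<noteq> {}}.
        h ` (U \<inter> S s) = zero_set V \<psi> \<inter> cstratum m n (\<iota> s) \<and>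
        diffeo_onto (U \<inter> S s) (d s) (A s) h (cjs m n (\<iota> s)) (zero_set V \<psi> \<inter> cstratum m n (\<iota> s)))"

lemma ss_smooth_iff_cutout_charts:
  "ss_smooth X P le d S A \<longleftrightarrow> naive_ss X P le d S A \<and>
     (\<forall>x\<in>topspace X. \<exists>U. openin X U \<and> x \<in> U \<and> (\<exists>m n l V \<psi> \<iota> h. cutout_chart X P le d S A U m n l V \<psi> \<iota> h))"
  unfolding ss_smooth_def cutout_chart_def ..

lemma cutout_chartD:
  assumes "cutout_chart X P le d S A U m n l V \<psi> \<iota> h"
  shows "cutout m n l V \<psi>" and "bij_betw \<iota> {s\<in>P. U \<inter> S s \<noteq> {}} (cposet m n V \<psi>)"
    and "homeomorphic_map (subtopology X U) (top_of_set (zero_set V \<psi>)) h"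
    and "s \<in> P \<Longrightarrow> U \<inter> S s \<noteq> {} \<Longrightarrow> t \<in> P \<Longrightarrow> U \<inter> S t \<noteq> {} \<Longrightarrow> le s t \<longleftrightarrow> \<iota> s \<subseteq> \<iota> t"
    and "s \<in> P \<Longrightarrow> U \<inter> S s \<noteq> {} \<Longrightarrow> d s + l = card (\<iota> s) + n"
    and "s \<in> P \<Longrightarrow> U \<inter> S s \<noteq> {} \<Longrightarrow> h ` (U \<inter> S s) = zero_set V \<psi> \<inter> cstratum m n (\<iota> s)"
    and "s \<in> P \<Longrightarrow> U \<inter> S s \<noteq> {} \<Longrightarrow>
      diffeo_onto (U \<inter> S s) (d s) (A s) h (cjs m n (\<iota> s)) (zero_set V \<psi> \<inter> cstratum m n (\<iota> s))"
  using assms unfolding cutout_chart_def by simp_all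

lemma cutout_chartI:
  assumes "cutout m n l V \<psi>" and "bij_betw \<iota> {s\<in>P. U \<inter> S s \<noteq> {}} (cposet m n V \<psi>)"
    and "homeomorphic_map (subtopology X U) (top_of_set (zero_set V \<psi>)) h"
    and "\<And>s t. s \<in> P \<Longrightarrow> U \<inter> S s \<noteq> {} \<Longrightarrow> t \<in> P \<Longrightarrow> U \<inter> S t \<noteq> {} \<Longrightarrow> le s t \<longleftrightarrow> \<iota> s \<subseteq> \<iota> t"
    and "\<And>s. s \<in> P \<Longrightarrow> U \<inter> S s \<noteq> {} \<Longrightarrow> d s + l = card (\<iota> s) + n"
    and "\<And>s. s \<in> P \<Longrightarrow> U \<inter> S s \<noteq> {} \<Longrightarrow> h ` (U \<inter> S s) = zero_set V \<psi> \<inter> cstratum m n (\<iota> s)"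
    and "\<And>s. s \<in> P \<Longrightarrow> U \<inter> S s \<noteq> {} \<Longrightarrow>
      diffeo_onto (U \<inter> S s) (d s) (A s) h (cjs m n (\<iota> s)) (zero_set V \<psi> \<inter> cstratum m n (\<iota> s))"
  shows "cutout_chart X P le d S A U m n l V \<psi> \<iota> h"
  using assms unfolding cutout_chart_def by simp

lemma stratifiedD:
  assumes "stratified X P le S" and "s \<in> P"
  shows "S s \<noteq> {}" and "S s \<subseteq> topspace X" and "locally_closed_in X (S s)"
    and "t \<in> P \<Longrightarrow> s \<noteq> t \<Longrightarrow> S s \<inter> S t = {}"
    and "X closure_of (S s) = (\<Union>t\<in>{t\<in>P. le t s}. S t)"
  using assms unfolding stratified_def by meson+

lemma topspace_stratified: "stratified X P le S \<Longrightarrow> topspace X = (\<Union>s\<in>P. S s)"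
  unfolding stratified_def by (elim conjE)

lemma graded_posetD:
  assumes "graded_poset P le d"
  shows "finite P" and "s \<in> P \<Longrightarrow> le s s"
    and "s \<in> P \<Longrightarrow> t \<in> P \<Longrightarrow> u \<in> P \<Longrightarrow> le s t \<Longrightarrow> le t u \<Longrightarrow> le s u"
    and "s \<in> P \<Longrightarrow> t \<in> P \<Longrightarrow> le s t \<Longrightarrow> s \<noteq> t \<Longrightarrow> d s < d t"
  using assms unfolding graded_poset_def by meson+

lemma graded_poset_subset:
  "graded_poset P le d \<Longrightarrow> Q \<subseteq> P \<Longrightarrow> graded_poset Q le d"
  unfolding graded_poset_def by (meson finite_subset subsetD)

lemma smooth_atlas_subtopology:
  assumes "M \<subseteq> C" and "smooth_atlas X M k Aa"
  shows "smooth_atlas (subtopology X C) M k Aa"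
proof -
  have "subtopology (subtopology X C) W = subtopology X W" if "W \<subseteq> M" for W
    using that assms(1) by (simp add: subtopology_subtopology Int_absorb1 subset_trans)
  then show ?thesis
    using assms(2) unfolding smooth_atlas_def by (simp add: case_prod_beta cong: conj_cong)
qed

lemma graded_dim_down_set:
  assumes "graded_poset P le d" and "s \<in> P"
  shows "graded_dim {t\<in>P. le t s} d = d s"
  unfolding graded_dim_def
proof (rule Max_eqI)
  show "finite (d ` {t \<in> P. le t s})"
    using graded_posetD(1)[OF assms(1)] by simp
  show "d s \<in> d ` {t \<in> P. le t s}"
    using assms graded_posetD(2)[OF assms(1)] by (intro imageI) simp
  fix y assume "y \<in> d ` {t \<in> P. le t s}"
  then obtain t where "t \<in> P" "le t s" "y = d t"
    by blast
  moreover have "t \<noteq> s \<Longrightarrow> d t < d s"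
    using graded_posetD(4)[OF assms(1)] assms(2) \<open>t \<in> P\<close> \<open>le t s\<close> by blast
  ultimately show "y \<le> d s"
    by fastforce
qed

lemma locally_closed_in_subtopology:
  assumes "locally_closed_in X A" and "A \<subseteq> C"
  shows "locally_closed_in (subtopology X C) A"
proof -
  obtain U F where U: "openin X U" and F: "closedin X F" and A: "A = U \<inter> F"
    using assms(1) unfolding locally_closed_in_def by blast
  have "openin (subtopology X C) (U \<inter> C)"
    by (rule openin_subtopology_Int[OF U])
  moreover have "closedin (subtopology X C) (F \<inter> C)"
    unfolding closedin_subtopology using F by blast
  moreover have "A = (U \<inter> C) \<inter> (F \<inter> C)"
    using A assms(2) by blast
  ultimately show ?thesis
    unfolding locally_closed_in_def by blast
qed

lemma stratified_closure_of_stratum: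
  assumes st: "stratified X P le S" and gp: "graded_poset P le d" and s: "s \<in> P"
  shows "stratified (subtopology X (X closure_of S s)) {t\<in>P. le t s} le S"
proof -
  let ?C = "X closure_of S s" and ?Q = "{t\<in>P. le t s}"
  have C: "?C = (\<Union>t\<in>?Q. S t)"
    by (rule stratifiedD(5)[OF st s])
  have closure: "subtopology X ?C closure_of S t = (\<Union>u\<in>{u\<in>?Q. le u t}. S u)" if t: "t \<in> ?Q" for t
  proof -
    have "subtopology X ?C closure_of S t = ?C \<inter> X closure_of (?C \<inter> S t)"
      by (rule closure_of_subtopology)
    also have "\<dots> = ?C \<inter> (\<Union>u\<in>{u\<in>P. le u t}. S u)"
      using C t stratifiedD(5)[OF st] by (simp add: Int_absorb1 SUP_upper)
    also have "\<dots> = (\<Union>u\<in>{u\<in>?Q. le u t}. S u)"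
      using C t s graded_posetD(3)[OF gp] by blast
    finally show ?thesis .
  qed
  show ?thesis
    unfolding stratified_def
  proof (intro conjI ballI impI)
    fix t assume t: "t \<in> ?Q"
    then show "S t \<noteq> {}" and "S t \<subseteq> topspace (subtopology X ?C)"
      and "locally_closed_in (subtopology X ?C) (S t)"
      using C stratifiedD(1-3)[OF st] by (auto intro!: locally_closed_in_subtopology)
    show "subtopology X ?C closure_of S t = (\<Union>u\<in>{u\<in>?Q. le u t}. S u)"
      by (rule closure[OF t])
    fix u assume "u \<in> ?Q" and "t \<noteq> u"
    then show "S t \<inter> S u = {}"
      using t stratifiedD(4)[OF st] by blast
  next
    show "topspace (subtopology X ?C) = (\<Union>t\<in>?Q. S t)"
      using C closure_of_subset_topspace by (metis topspace_subtopology_subset)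
  qed
qed

lemma naive_ss_closure_of_stratum:
  assumes "naive_ss X P le d S A" and "s \<in> P"
  shows "naive_ss (subtopology X (X closure_of S s)) {t\<in>P. le t s} le d S A"
proof -
  have st: "stratified X P le S" and gp: "graded_poset P le d"
    using assms(1) unfolding naive_ss_def by blast+
  have "smooth_atlas (subtopology X (X closure_of S s)) (S t) (d t) (A t)" if "t \<in> P" "le t s" for t
    using assms that stratifiedD(5)[OF st assms(2)] unfolding naive_ss_def
    by (blast intro: smooth_atlas_subtopology)
  then show ?thesis
    using assms(1) stratified_closure_of_stratum[OF st gp assms(2)] graded_poset_subset[OF gp]
    unfolding naive_ss_def by (auto intro: second_countable_subtopology Hausdorff_space_subtopology)
qed

lemma cutout_chart_image_closure_of_stratum:
  assumes st: "stratified X P le S" and s: "s \<in> P" and U: "openin X U"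
    and chart: "cutout_chart X P le d S A U m n l V \<psi> \<iota> h" and Us: "U \<inter> S s \<noteq> {}"
  shows "h ` (U \<inter> X closure_of S s) = zero_set V \<psi> \<inter> csub (cjs m n (\<iota> s))"
proof
  let ?Z = "zero_set V \<psi>"
  have below: "le t s \<longleftrightarrow> \<iota> t \<subseteq> \<iota> s" if "t \<in> P" "U \<inter> S t \<noteq> {}" for t
    using cutout_chartD(4)[OF chart that s Us] .
  have stratum: "h p \<in> ?Z \<inter> cstratum m n (\<iota> t)" if "t \<in> P" "p \<in> U" "p \<in> S t" for p t
    using cutout_chartD(6)[OF chart \<open>t \<in> P\<close>] that by blast
  show "h ` (U \<inter> X closure_of S s) \<subseteq> ?Z \<inter> csub (cjs m n (\<iota> s))"
  proof clarify
    fix p assume "p \<in> U" "p \<in> X closure_of S s"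
    then obtain t where t: "t \<in> P" "le t s" "p \<in> S t"
      using stratifiedD(5)[OF st s] by blast
    then have "csub (cjs m n (\<iota> t)) \<subseteq> csub (cjs m n (\<iota> s))"
      using below \<open>p \<in> U\<close> by (intro csub_mono) (auto simp: cjs_def)
    then show "h p \<in> ?Z \<inter> csub (cjs m n (\<iota> s))"
      using stratum[OF t(1) \<open>p \<in> U\<close> t(3)] cstratum_subset_csub by blast
  qed
  show "?Z \<inter> csub (cjs m n (\<iota> s)) \<subseteq> h ` (U \<inter> X closure_of S s)"
  proof
    fix z assume z: "z \<in> ?Z \<inter> csub (cjs m n (\<iota> s))"
    have "h ` topspace (subtopology X U) = topspace (top_of_set ?Z)"
      using homeomorphic_imp_surjective_map[OF cutout_chartD(3)[OF chart]] .
    then obtain p where p: "p \<in> U" "z = h p"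
      using z openin_subset[OF U] by auto
    then obtain t where t: "t \<in> P" "p \<in> S t"
      using topspace_stratified[OF st] openin_subset[OF U] by blast
    then have zt: "z \<in> cstratum m n (\<iota> t)"
      using stratum p by blast
    have "\<iota> t \<in> cposet m n V \<psi>"
      using cutout_chartD(2)[OF chart] t p by (auto simp: bij_betw_def)
    then have "\<iota> t \<subseteq> {..<m}"
      by (simp add: cposet_def)
    then have "\<iota> t \<subseteq> \<iota> s"
      using z zt by (force simp: cstratum_def csub_def cjs_def)
    then have "p \<in> X closure_of S s"
      using below t p stratifiedD(5)[OF st s] by blast
    then show "z \<in> h ` (U \<inter> X closure_of S s)"
      using p by blast
  qed
qed

lemma cutout_chart_homeomorphic_closure_of_stratum:
  assumes st: "stratified X P le S" and s: "s \<in> P" and U: "openin X U"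
    and chart: "cutout_chart X P le d S A U m n l V \<psi> \<iota> h" and Us: "U \<inter> S s \<noteq> {}"
  shows "homeomorphic_map (subtopology X (U \<inter> X closure_of S s))
    (top_of_set (zero_set V \<psi> \<inter> csub (cjs m n (\<iota> s)))) h"
proof -
  have "h ` (topspace (subtopology X U) \<inter> (U \<inter> X closure_of S s)) =
      topspace (top_of_set (zero_set V \<psi>)) \<inter> (zero_set V \<psi> \<inter> csub (cjs m n (\<iota> s)))"
    using cutout_chart_image_closure_of_stratum[OF st s U chart Us] openin_subset[OF U] by auto
  from homeomorphic_map_subtopologies[OF cutout_chartD(3)[OF chart] this]
  show ?thesis
    by (simp add: subtopology_subtopology)
qed

lemma cutout_chart_strata_closure_of_stratum:
  assumes st: "stratified X P le S" and s: "s \<in> P"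
    and chart: "cutout_chart X P le d S A U m n l V \<psi> \<iota> h" and Us: "U \<inter> S s \<noteq> {}"
  shows "{t\<in>{t\<in>P. le t s}. U \<inter> X closure_of S s \<inter> S t \<noteq> {}} = {t\<in>{t\<in>P. U \<inter> S t \<noteq> {}}. \<iota> t \<subseteq> \<iota> s}"
  using cutout_chartD(4)[OF chart _ _ s Us] stratifiedD(5)[OF st s] by blast

lemma cutout_chart_closure_of_stratum:
  assumes st: "stratified X P le S" and s: "s \<in> P" and U: "openin X U"
    and chart: "cutout_chart X P le d S A U m n l V \<psi> \<iota> h" and Us: "U \<inter> S s \<noteq> {}"
  obtains m' V' \<psi>' \<iota>' h' where
    "cutout_chart (subtopology X (X closure_of S s)) {t\<in>P. le t s} le d S A (U \<inter> X closure_of S s)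
       m' n l V' \<psi>' \<iota>' h'"
proof -
  let ?C = "X closure_of S s" and ?K = "\<iota> s"
  have "?K \<in> cposet m n V \<psi>"
    using cutout_chartD(2)[OF chart] s Us by (auto simp: bij_betw_def)
  then have "?K \<subseteq> {..<m}"
    by (simp add: cposet_def)
  then obtain \<sigma> where "face_reindexing \<sigma> ?K m n"
    by (rule face_reindexing_exists)
  then interpret face_reindexing \<sigma> ?K m n .
  have strata: "t \<in> P \<and> le t s \<and> U \<inter> ?C \<inter> S t \<noteq> {} \<longleftrightarrow> t \<in> P \<and> U \<inter> S t \<noteq> {} \<and> \<iota> t \<subseteq> ?K" for t
    using cutout_chart_strata_closure_of_stratum[OF st s chart Us] by blast
  have U_C: "U \<inter> ?C \<inter> S t = U \<inter> S t" if "t \<in> P" "le t s" for t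
    using stratifiedD(5)[OF st s] that by blast
  from homeomorphic_map_compose[OF cutout_chart_homeomorphic_closure_of_stratum[OF st s U chart Us]
      homeomorphic_map_comp_right[OF bij]]
  have homeo: "homeomorphic_map (subtopology (subtopology X ?C) (U \<inter> ?C))
      (top_of_set (zero_set (face_domain V) (\<psi> \<circ> permute_coords \<sigma>))) ((\<lambda>x. x \<circ> \<sigma>) \<circ> h)"
    using zero_set_face_domain[OF openin_imp_subset[OF cutoutD(1)[OF cutout_chartD(1)[OF chart]]]]
    by (simp add: subtopology_subtopology Int_commute Int_left_commute)
  show ?thesis
  proof (rule that[OF cutout_chartI])
    show "cutout (card ?K) n l (face_domain V) (\<psi> \<circ> permute_coords \<sigma>)"
      by (rule cutout_face_domain[OF cutout_chartD(1)[OF chart]])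
    show "bij_betw (\<lambda>t. \<sigma> -` \<iota> t) {t\<in>{t\<in>P. le t s}. U \<inter> ?C \<inter> S t \<noteq> {}}
        (cposet (card ?K) n (face_domain V) (\<psi> \<circ> permute_coords \<sigma>))"
      using bij_betw_face_strata[OF cutout_chartD(2)[OF chart]] strata by simp
    show "homeomorphic_map (subtopology (subtopology X ?C) (U \<inter> ?C))
        (top_of_set (zero_set (face_domain V) (\<psi> \<circ> permute_coords \<sigma>))) ((\<lambda>x. x \<circ> \<sigma>) \<circ> h)"
      by (rule homeo)
  next
    fix t u assume "t \<in> {t\<in>P. le t s}" "U \<inter> ?C \<inter> S t \<noteq> {}" "u \<in> {t\<in>P. le t s}" "U \<inter> ?C \<inter> S u \<noteq> {}"
    then have "le t u \<longleftrightarrow> \<iota> t \<subseteq> \<iota> u"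
      using cutout_chartD(4)[OF chart] strata by blast
    then show "le t u \<longleftrightarrow> \<sigma> -` \<iota> t \<subseteq> \<sigma> -` \<iota> u"
      using bij by (simp add: vimage_subset_eq bij_is_surj surj_image_vimage_eq)
  next
    fix t assume t: "t \<in> {t\<in>P. le t s}" "U \<inter> ?C \<inter> S t \<noteq> {}"
    then have "t \<in> P" "U \<inter> S t \<noteq> {}" "\<iota> t \<subseteq> ?K"
      using strata by blast+
    show "d t + l = card (\<sigma> -` \<iota> t) + n"
      using cutout_chartD(5)[OF chart \<open>t \<in> P\<close> \<open>U \<inter> S t \<noteq> {}\<close>] bij
      by (simp add: card_vimage_inj bij_is_inj bij_is_surj)
    show "((\<lambda>x. x \<circ> \<sigma>) \<circ> h) ` (U \<inter> ?C \<inter> S t) =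
        zero_set (face_domain V) (\<psi> \<circ> permute_coords \<sigma>) \<inter> cstratum (card ?K) n (\<sigma> -` \<iota> t)"
      and "diffeo_onto (U \<inter> ?C \<inter> S t) (d t) (A t) ((\<lambda>x. x \<circ> \<sigma>) \<circ> h) (cjs (card ?K) n (\<sigma> -` \<iota> t))
        (zero_set (face_domain V) (\<psi> \<circ> permute_coords \<sigma>) \<inter> cstratum (card ?K) n (\<sigma> -` \<iota> t))"
      using face_stratum_diffeo[OF \<open>\<iota> t \<subseteq> ?K\<close> cutout_chartD(6,7)[OF chart \<open>t \<in> P\<close> \<open>U \<inter> S t \<noteq> {}\<close>]]
        U_C[of t] t by simp_all
  qed
qed

lemma cutout_chart_at_closure_point:
  assumes st: "stratified X P le S" and s: "s \<in> P" and x: "x \<in> X closure_of S s"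
    and U: "openin X U" "x \<in> U" and chart: "cutout_chart X P le d S A U m k l V \<psi> \<iota> h"
  shows "\<exists>U'. openin (subtopology X (X closure_of S s)) U' \<and> x \<in> U' \<and>
    (\<exists>m k l V \<psi> \<iota> h. cutout_chart (subtopology X (X closure_of S s)) {t\<in>P. le t s} le d S A U' m k l V \<psi> \<iota> h)"
proof -
  have "U \<inter> S s \<noteq> {}"
    using x U unfolding in_closure_of by blast
  then obtain m' V' \<psi>' \<iota>' h' where "cutout_chart (subtopology X (X closure_of S s)) {t\<in>P. le t s} le d S A
      (U \<inter> X closure_of S s) m' k l V' \<psi>' \<iota>' h'"
    by (rule cutout_chart_closure_of_stratum[OF st s U(1) chart])
  moreover have "openin (subtopology X (X closure_of S s)) (U \<inter> X closure_of S s)"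
    by (rule openin_subtopology_Int[OF U(1)])
  moreover have "x \<in> U \<inter> X closure_of S s"
    using U(2) x by blast
  ultimately show ?thesis
    by (intro exI conjI)
qed

theorem lemmaA13:
  fixes X :: "'a topology" and P :: "'s set" and le :: "'s \<Rightarrow> 's \<Rightarrow> bool"
    and d :: "'s \<Rightarrow> nat" and S :: "'s \<Rightarrow> 'a set"
    and A :: "'s \<Rightarrow> ('a set \<times> ('a \<Rightarrow> nat \<Rightarrow> real)) set"
    and n :: nat and s :: 's
  assumes "ss_smooth X P le d S A" and "graded_dim P d = n" and "s \<in> P"
  shows "ss_smooth (subtopology X (X closure_of S s)) {t\<in>P. le t s} le d S A \<and>
         graded_dim {t\<in>P. le t s} d = d s"
proof
  have naive: "naive_ss X P le d S A"
    using assms(1) unfolding ss_smooth_iff_cutout_charts by (elim conjE)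
  have charts: "\<forall>x\<in>topspace X. \<exists>U. openin X U \<and> x \<in> U \<and>
      (\<exists>m k l V \<psi> \<iota> h. cutout_chart X P le d S A U m k l V \<psi> \<iota> h)"
    using assms(1) unfolding ss_smooth_iff_cutout_charts by (elim conjE)
  have st: "stratified X P le S"
    using naive unfolding naive_ss_def by (elim conjE)
  have gp: "graded_poset P le d"
    using naive unfolding naive_ss_def by (elim conjE)
  show "graded_dim {t\<in>P. le t s} d = d s"
    by (rule graded_dim_down_set[OF gp assms(3)])
  show "ss_smooth (subtopology X (X closure_of S s)) {t\<in>P. le t s} le d S A"
    unfolding ss_smooth_iff_cutout_charts
  proof (intro conjI ballI)
    show "naive_ss (subtopology X (X closure_of S s)) {t\<in>P. le t s} le d S A"
      by (rule naive_ss_closure_of_stratum[OF naive assms(3)])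
    fix x assume "x \<in> topspace (subtopology X (X closure_of S s))"
    then have "x \<in> topspace X" and x: "x \<in> X closure_of S s"
      by auto
    then obtain U m k l V \<psi> \<iota> h where "openin X U" "x \<in> U"
      and "cutout_chart X P le d S A U m k l V \<psi> \<iota> h"
      using bspec[OF charts \<open>x \<in> topspace X\<close>] by (elim exE conjE) blast
    then show "\<exists>U'. openin (subtopology X (X closure_of S s)) U' \<and> x \<in> U' \<and>
        (\<exists>m k l V \<psi> \<iota> h. cutout_chart (subtopology X (X closure_of S s)) {t\<in>P. le t s} le d S A U' m k l V \<psi> \<iota> h)"
      by (rule cutout_chart_at_closure_point[OF st assms(3) x])
  qed
qed

end
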